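(* (Consistency of DCC.) There is no label context $\Delta$, universe $U$ and DCC term $M$ such that $\Delta;\cdot\vdash M:(\Pi A{:}U.\,A)$.
   Context: DCC (Defunctionalized Calculus of Constructions): expressions $A,B,L,M,N::=x\mid U_i\mid\Pi x{:}A.B\mid L@M\mid\ell_i\{\overline M\}$, where $\ell_i$ ($i\in\mathbb N$) are label names disjoint from variables and $\overline M=M_1,\dots,M_n$ ($n\ge0$); universes are $U_i$. Type contexts $\Gamma::=\cdot\mid\Gamma,x{:}A$; label contexts $\Delta::=\cdot\mid\Delta,\ell_i(\{\overline x{:}\overline A\},x{:}A\mapsto M:B)$. Substitution standard with $\ell\{\overline M\}[N/x]=\ell\{\overline{M[N/x]}\}$; $[\overline M/\overline x]=[M_1/x_1,\dots,M_n/x_n]$. Reduction: $\Delta\vdash\ell\{\overline M\}@N\triangleright L[\overline M/\overline x,N/x]$ when $\ell(\{\overline x{:}\overline A\},x{:}A\mapsto L:B)\in\Delta$. Equivalence $\Delta\vdash M\equiv N$: common reduct; or $\Delta\vdash L\triangleright^*\ell\{\overline N\}$, $\Delta\vdash M\triangleright^*M'$, $\ell(\{\overline x{:}\overline A\},x{:}A\mapsto N:B)\in\Delta$, $\Delta\vdash N[\overline N/\overline x]\equiv M'@x$ give $\Delta\vdash L\equiv M$; or symmetrically. Typing and formation (mutual): variables from a well-formed context, $U_i:U_{i+1}$, $\Pi x{:}A.B:U_{\max(i,j)}$ when $A:U_i$ and $B:U_j$ under $x{:}A$, $M@N:B[N/x]$ when $M:\Pi x{:}A.B$ and $N:A$,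 conversion along $\equiv$ to a type $B:U_i$, and: if $\vdash\Delta;\Gamma$, $\ell(\{\overline x{:}\overline A\},x{:}A\mapsto M:B)\in\Delta$, $|\overline M|=|\overline x|$ and $\Delta;\Gamma\vdash M_k:A_k[M_1/x_1,\dots,M_{k-1}/x_{k-1}]$ for all $k$, then $\Delta;\Gamma\vdash\ell\{\overline M\}:\Pi x{:}A[\overline M/\overline x].B[\overline M/\overline x]$. Formation: $\vdash\cdot;\cdot$; a fresh label entry $\ell(\{\overline x{:}\overline A\},x{:}A\mapsto M:B)$ may be added when $\Delta;\overline x{:}\overline A\vdash\Pi x{:}A.B:U_i$ and $\Delta;\overline x{:}\overline A,x{:}A\vdash M:B$; $\vdash\Delta;\Gamma$ and $\Delta;\Gamma\vdash A:U_i$ give $\vdash\Delta;\Gamma,x{:}A$. *)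

theory Defs
  imports Main
begin

text \<open>DCC syntax with de Bruijn indices.  In \<open>Pi A B\<close> the body \<open>B\<close> binds index 0.
  \<open>Lab l Ms\<close> is the label closure \<open>\<ell>_l{Ms}\<close>.\<close>

datatype trm =
    Var nat
  | Univ nat
  | Pi trm trm
  | App trm trm
  | Lab nat "trm list"

primrec ren :: "(nat \<Rightarrow> nat) \<Rightarrow> trm \<Rightarrow> trm" where
  "ren f (Var i) = Var (f i)"
| "ren f (Univ i) = Univ i"
| "ren f (Pi A B) = Pi (ren f A) (ren (\<lambda>n. case n of 0 \<Rightarrow> 0 | Suc k \<Rightarrow> Suc (f k)) B)"
| "ren f (App M N) = App (ren f M) (ren f N)"
| "ren f (Lab l Ms) = Lab l (map (ren f) Ms)"

definition lift :: "nat \<Rightarrow> trm \<Rightarrow> trm" where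
  "lift k = ren (\<lambda>j. j + k)"

definition up :: "(nat \<Rightarrow> trm) \<Rightarrow> nat \<Rightarrow> trm" where
  "up \<sigma> = (\<lambda>n. case n of 0 \<Rightarrow> Var 0 | Suc k \<Rightarrow> lift 1 (\<sigma> k))"

primrec subst :: "(nat \<Rightarrow> trm) \<Rightarrow> trm \<Rightarrow> trm" where
  "subst \<sigma> (Var i) = \<sigma> i"
| "subst \<sigma> (Univ i) = Univ i"
| "subst \<sigma> (Pi A B) = Pi (subst \<sigma> A) (subst (up \<sigma>) B)"
| "subst \<sigma> (App M N) = App (subst \<sigma> M) (subst \<sigma> N)"
| "subst \<sigma> (Lab l Ms) = Lab l (map (subst \<sigma>) Ms)"

text \<open>\<open>inst [M1,...,Mn]\<close> is the substitution \<open>[M1/x1,...,Mn/xn]\<close> for a telescope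
  \<open>x1..xn\<close> (so \<open>xn\<close> is index 0); remaining indices are shifted down by n.\<close>
definition inst :: "trm list \<Rightarrow> nat \<Rightarrow> trm" where
  "inst Ms = (\<lambda>k. if k < length Ms then rev Ms ! k else Var (k - length Ms))"

text \<open>A label entry \<open>\<ell>_l({x1:A1,...,xn:An}, x:A \<mapsto> M : B)\<close> is \<open>(l, [A1,...,An], A, M, B)\<close>,
  where \<open>Ak\<close> lives in the context \<open>x1..x(k-1)\<close>, \<open>A\<close> in \<open>x1..xn\<close>, and \<open>M\<close>, \<open>B\<close> in
  \<open>x1..xn,x\<close>.  Label contexts are lists with the newest entry first.
  Type contexts are lists with the newest variable (index 0) first; each entry
  is typed in the tail of the list.\<close>
type_synonym lentry = "nat \<times> trm list \<times> trm \<times> trm \<times> trm"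
type_synonym lctx = "lentry list"
type_synonym tctx = "trm list"

inductive red :: "lctx \<Rightarrow> trm \<Rightarrow> trm \<Rightarrow> bool" where
  red_lab: "(l, As, A, L, B) \<in> set \<Delta> \<Longrightarrow> length Ms = length As \<Longrightarrow>
     red \<Delta> (App (Lab l Ms) N) (subst (inst (Ms @ [N])) L)"

inductive reds :: "lctx \<Rightarrow> trm \<Rightarrow> trm \<Rightarrow> bool" where
  reds_refl: "reds \<Delta> M M"
| reds_step: "red \<Delta> M N \<Longrightarrow> reds \<Delta> M N"
| reds_trans: "reds \<Delta> L M \<Longrightarrow> reds \<Delta> M N \<Longrightarrow> reds \<Delta> L N"
| reds_pi: "reds \<Delta> A A' \<Longrightarrow> reds \<Delta> B B' \<Longrightarrow> reds \<Delta> (Pi A B) (Pi A' B')"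
| reds_app: "reds \<Delta> M M' \<Longrightarrow> reds \<Delta> N N' \<Longrightarrow> reds \<Delta> (App M N) (App M' N')"
| reds_lab: "list_all2 (reds \<Delta>) Ms Ms' \<Longrightarrow> reds \<Delta> (Lab l Ms) (Lab l Ms')"

text \<open>In the eta rule
  the bound variable \<open>x\<close> is index 0, \<open>N[Ns/xs]\<close> is \<open>subst (up (inst Ns)) N\<close>, and
  \<open>M'@x\<close> is \<open>App (lift 1 M') (Var 0)\<close>.\<close>
inductive equiv :: "lctx \<Rightarrow> trm \<Rightarrow> trm \<Rightarrow> bool" where
  eq_reduct: "reds \<Delta> M L \<Longrightarrow> reds \<Delta> N L \<Longrightarrow> equiv \<Delta> M N"
| eq_eta1: "reds \<Delta> L (Lab l Ns) \<Longrightarrow> reds \<Delta> M M' \<Longrightarrow> (l, As, A, N, B) \<in> set \<Delta> \<Longrightarrow>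
     length Ns = length As \<Longrightarrow>
     equiv \<Delta> (subst (up (inst Ns)) N) (App (lift 1 M') (Var 0)) \<Longrightarrow> equiv \<Delta> L M"
| eq_eta2: "reds \<Delta> L (Lab l Ns) \<Longrightarrow> reds \<Delta> M M' \<Longrightarrow> (l, As, A, N, B) \<in> set \<Delta> \<Longrightarrow>
     length Ns = length As \<Longrightarrow>
     equiv \<Delta> (App (lift 1 M') (Var 0)) (subst (up (inst Ns)) N) \<Longrightarrow> equiv \<Delta> M L"

inductive typing :: "lctx \<Rightarrow> tctx \<Rightarrow> trm \<Rightarrow> trm \<Rightarrow> bool"
  and wf :: "lctx \<Rightarrow> tctx \<Rightarrow> bool" where
  t_var: "wf \<Delta> \<Gamma> \<Longrightarrow> i < length \<Gamma> \<Longrightarrow> typing \<Delta> \<Gamma> (Var i) (lift (Suc i) (\<Gamma> ! i))"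
| t_univ: "wf \<Delta> \<Gamma> \<Longrightarrow> typing \<Delta> \<Gamma> (Univ i) (Univ (Suc i))"
| t_pi: "typing \<Delta> \<Gamma> A (Univ i) \<Longrightarrow> typing \<Delta> (A # \<Gamma>) B (Univ j) \<Longrightarrow>
     typing \<Delta> \<Gamma> (Pi A B) (Univ (max i j))"
| t_app: "typing \<Delta> \<Gamma> M (Pi A B) \<Longrightarrow> typing \<Delta> \<Gamma> N A \<Longrightarrow>
     typing \<Delta> \<Gamma> (App M N) (subst (inst [N]) B)"
| t_conv: "typing \<Delta> \<Gamma> M A \<Longrightarrow> equiv \<Delta> A B \<Longrightarrow> typing \<Delta> \<Gamma> B (Univ i) \<Longrightarrow>
     typing \<Delta> \<Gamma> M B"
| t_lab: "wf \<Delta> \<Gamma> \<Longrightarrow> (l, As, A, L, B) \<in> set \<Delta> \<Longrightarrow> length Ms = length As \<Longrightarrow>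
     (\<forall>k < length Ms. typing \<Delta> \<Gamma> (Ms ! k) (subst (inst (take k Ms)) (As ! k))) \<Longrightarrow>
     typing \<Delta> \<Gamma> (Lab l Ms) (subst (inst Ms) (Pi A B))"
| wf_empty: "wf [] []"
| wf_label: "typing \<Delta> (rev As) (Pi A B) (Univ i) \<Longrightarrow> typing \<Delta> (A # rev As) M B \<Longrightarrow>
     l \<notin> fst ` set \<Delta> \<Longrightarrow> wf ((l, As, A, M, B) # \<Delta>) []"
| wf_cons: "wf \<Delta> \<Gamma> \<Longrightarrow> typing \<Delta> \<Gamma> A (Univ i) \<Longrightarrow> wf \<Delta> (A # \<Gamma>)"

end

theory Submission
  imports Defs "HOL-Library.Confluence"
begin

(* Consistency is shown with a reducibility model.  Fix the label context D of a derivation and a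
   label name c not used in D.  By recursion on the universe level, a type is interpreted as a
   predicate on terms through its reducts: U_j denotes the predicate of being a type of level j, a
   Pi type the function space of the interpretations, and the label closure c{} the empty predicate.
   Confluence of (parallel) reduction makes the interpretations of joinable types equal, and since no
   interpreted type reduces to a label of D, the eta rules of the equivalence never relate two
   interpreted types; so every derivable judgement is valid in the model, each label body being
   validated when its entry is added to D.  A closed inhabitant of Pi A:U_i. A, applied to the type
   c{} of level i, would then inhabit the empty predicate. *)

section \<open>Renaming and substitution\<close>

lemma ren_ren: "ren f (ren g t) = ren (f \<circ> g) t"
proof (induction t arbitrary: f g)
  case (Pi A B)
  let ?F = "\<lambda>n. case n of 0 \<Rightarrow> 0 | Suc k \<Rightarrow> Suc (f k)"
  let ?G = "\<lambda>n. case n of 0 \<Rightarrow> 0 | Suc k \<Rightarrow> Suc (g k)"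
  have "?F \<circ> ?G = (\<lambda>n. case n of 0 \<Rightarrow> 0 | Suc k \<Rightarrow> Suc ((f \<circ> g) k))"
    by (auto simp: fun_eq_iff split: nat.split)
  then show ?case by (simp only: ren.simps Pi.IH)
qed auto

lemma ren_id: "ren (\<lambda>j. j) t = t"
proof (induction t)
  case (Pi A B)
  have "(\<lambda>n. case n of 0 \<Rightarrow> 0 | Suc k \<Rightarrow> Suc k) = (\<lambda>j. j)"
    by (auto simp: fun_eq_iff split: nat.split)
  then show ?case using Pi by simp
qed (auto simp: map_idI)

lemma lift_0: "lift 0 t = t"
  by (simp add: lift_def ren_id)

lemma subst_ren: "subst \<sigma> (ren f t) = subst (\<sigma> \<circ> f) t"
proof (induction t arbitrary: \<sigma> f)
  case (Pi A B)
  have "up \<sigma> \<circ> (\<lambda>n. case n of 0 \<Rightarrow> 0 | Suc k \<Rightarrow> Suc (f k)) = up (\<sigma> \<circ> f)"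
    by (auto simp: fun_eq_iff up_def split: nat.split)
  then show ?case by (simp only: ren.simps subst.simps Pi.IH)
qed auto

lemma ren_subst: "ren f (subst \<sigma> t) = subst (ren f \<circ> \<sigma>) t"
proof (induction t arbitrary: \<sigma> f)
  case (Pi A B)
  have "ren (\<lambda>n. case n of 0 \<Rightarrow> 0 | Suc k \<Rightarrow> Suc (f k)) \<circ> up \<sigma> = up (ren f \<circ> \<sigma>)"
    by (auto simp: fun_eq_iff up_def lift_def ren_ren comp_def split: nat.split)
  then show ?case by (simp only: ren.simps subst.simps Pi.IH)
qed auto

lemma subst_subst: "subst \<sigma> (subst \<tau> t) = subst (subst \<sigma> \<circ> \<tau>) t"
proof (induction t arbitrary: \<sigma> \<tau>)
  case (Pi A B)
  have "subst (up \<sigma>) \<circ> up \<tau> = up (subst \<sigma> \<circ> \<tau>)"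
    by (auto simp: fun_eq_iff up_def lift_def subst_ren ren_subst comp_def split: nat.split)
  then show ?case by (simp only: subst.simps Pi.IH)
qed auto

lemma up_Var: "up Var = Var"
  by (auto simp: fun_eq_iff up_def lift_def split: nat.split)

lemma subst_Var: "subst Var t = t"
  by (induction t) (auto simp: up_Var map_idI)

definition scons :: "trm \<Rightarrow> (nat \<Rightarrow> trm) \<Rightarrow> nat \<Rightarrow> trm" where
  "scons a \<sigma> = (\<lambda>n. case n of 0 \<Rightarrow> a | Suc k \<Rightarrow> \<sigma> k)"

lemma scons_0 [simp]: "scons a \<sigma> 0 = a"
  and scons_Suc [simp]: "scons a \<sigma> (Suc k) = \<sigma> k"
  by (simp_all add: scons_def)

lemma inst_snoc: "inst (Ms @ [a]) = scons a (inst Ms)"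
  by (auto simp: fun_eq_iff inst_def scons_def nth_append split: nat.split)

lemma subst_scons_lift_Suc: "subst (scons a \<sigma>) (lift (Suc k) t) = subst \<sigma> (lift k t)"
  by (simp add: lift_def subst_ren comp_def scons_def)

lemma subst_inst_up: "subst (inst [a]) (subst (up \<sigma>) B) = subst (scons a \<sigma>) B"
proof -
  have "subst (inst [a]) \<circ> up \<sigma> = scons a \<sigma>"
    by (auto simp: fun_eq_iff up_def lift_def subst_ren scons_def inst_def comp_def subst_Var
        split: nat.split)
  then show ?thesis by (simp add: subst_subst)
qed

lemma subst_subst_inst_single:
  "subst \<sigma> (subst (inst [N]) B) = subst (inst [subst \<sigma> N]) (subst (up \<sigma>) B)"
proof -
  have "subst \<sigma> \<circ> inst [N] = scons (subst \<sigma> N) \<sigma>"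
    by (auto simp: fun_eq_iff inst_def scons_def split: nat.split)
  then have "subst \<sigma> (subst (inst [N]) B) = subst (scons (subst \<sigma> N) \<sigma>) B"
    by (simp add: subst_subst)
  then show ?thesis by (simp only: subst_inst_up)
qed

section \<open>Scoping\<close>

fun scoped :: "nat \<Rightarrow> trm \<Rightarrow> bool" where
  "scoped n (Var i) = (i < n)"
| "scoped n (Univ i) = True"
| "scoped n (Pi A B) = (scoped n A \<and> scoped (Suc n) B)"
| "scoped n (App M N) = (scoped n M \<and> scoped n N)"
| "scoped n (Lab l Ms) = (\<forall>M\<in>set Ms. scoped n M)"

lemma subst_cong_scoped:
  "scoped n t \<Longrightarrow> (\<And>k. k < n \<Longrightarrow> \<sigma> k = \<sigma>' k) \<Longrightarrow> subst \<sigma> t = subst \<sigma>' t"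
proof (induction t arbitrary: n \<sigma> \<sigma>')
  case (Pi A B)
  have "up \<sigma> k = up \<sigma>' k" if "k < Suc n" for k
    using Pi.prems(2) that by (auto simp: up_def split: nat.split)
  then show ?case
    using Pi.prems Pi.IH(1)[of n \<sigma> \<sigma>'] Pi.IH(2)[of "Suc n" "up \<sigma>" "up \<sigma>'"] by simp
next
  case (App M N)
  then show ?case using App.IH(1)[of n \<sigma> \<sigma>'] App.IH(2)[of n \<sigma> \<sigma>'] by simp
next
  case (Lab l Ms)
  have "subst \<sigma> M = subst \<sigma>' M" if "M \<in> set Ms" for M
    using Lab.IH[OF that, of n \<sigma> \<sigma>'] Lab.prems that by simp
  then show ?case by simp
qed simp_all

definition scoped_ctx :: "tctx \<Rightarrow> bool" where
  "scoped_ctx \<Gamma> \<longleftrightarrow> (\<forall>k<length \<Gamma>. scoped (length \<Gamma> - Suc k) (\<Gamma> ! k))"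

lemma inst_map: "k < length Ms \<Longrightarrow> g (inst Ms k) = inst (map g Ms) k"
  by (simp add: inst_def rev_map)

lemma subst_subst_inst_scoped:
  assumes "scoped (length Ms) t"
  shows "subst \<sigma> (subst (inst Ms) t) = subst (inst (map (subst \<sigma>) Ms)) t"
  unfolding subst_subst by (rule subst_cong_scoped[OF assms]) (simp add: inst_map)

lemma ren_subst_inst_scoped:
  assumes "scoped (length Ms) t"
  shows "ren f (subst (inst Ms) t) = subst (inst (map (ren f) Ms)) t"
  unfolding ren_subst by (rule subst_cong_scoped[OF assms]) (simp add: inst_map)

definition lctx_ok :: "lctx \<Rightarrow> bool" where
  "lctx_ok D \<longleftrightarrow> distinct (map fst D) \<and> (\<forall>l As A L B. (l, As, A, L, B) \<in> set D \<longrightarrow>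
      scoped (Suc (length As)) L \<and> scoped (length As) (Pi A B) \<and> scoped_ctx (rev As))"

lemma lctx_okD:
  "lctx_ok D \<Longrightarrow> (l, As, A, L, B) \<in> set D \<Longrightarrow>
   scoped (Suc (length As)) L \<and> scoped (length As) (Pi A B) \<and> scoped_ctx (rev As)"
  unfolding lctx_ok_def by blast

lemma lctx_ok_unique: "lctx_ok D \<Longrightarrow> (l, X) \<in> set D \<Longrightarrow> (l, Y) \<in> set D \<Longrightarrow> X = Y"
  unfolding lctx_ok_def by (meson eq_key_imp_eq_value)

lemma typing_scoped:
  "typing \<Delta> \<Gamma> M T \<Longrightarrow> scoped (length \<Gamma>) M \<and> lctx_ok \<Delta> \<and> scoped_ctx \<Gamma>"
  "wf \<Delta> \<Gamma> \<Longrightarrow> lctx_ok \<Delta> \<and> scoped_ctx \<Gamma>"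
proof (induction rule: typing_wf.inducts)
  case (wf_cons \<Delta> \<Gamma> A i)
  have "scoped (length (A # \<Gamma>) - Suc k) ((A # \<Gamma>) ! k)" if "k < length (A # \<Gamma>)" for k
    using wf_cons that by (cases k) (auto simp: scoped_ctx_def)
  then show ?case using wf_cons by (simp add: scoped_ctx_def)
qed (auto simp: lctx_ok_def scoped_ctx_def in_set_conv_nth)

section \<open>Parallel reduction and confluence\<close>

inductive par :: "lctx \<Rightarrow> trm \<Rightarrow> trm \<Rightarrow> bool" for D where
  par_Var: "par D (Var i) (Var i)"
| par_Univ: "par D (Univ i) (Univ i)"
| par_Pi: "par D A A' \<Longrightarrow> par D B B' \<Longrightarrow> par D (Pi A B) (Pi A' B')"
| par_App: "par D M M' \<Longrightarrow> par D N N' \<Longrightarrow> par D (App M N) (App M' N')"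
| par_Lab: "list_all2 (par D) Ms Ms' \<Longrightarrow> par D (Lab l Ms) (Lab l Ms')"
| par_beta: "(l, As, A, L, B) \<in> set D \<Longrightarrow> length Ms = length As \<Longrightarrow> list_all2 (par D) Ms Ms' \<Longrightarrow>
    par D N N' \<Longrightarrow> par D (App (Lab l Ms) N) (subst (inst (Ms' @ [N'])) L)"

abbreviation pars :: "lctx \<Rightarrow> trm \<Rightarrow> trm \<Rightarrow> bool" where
  "pars D \<equiv> (par D)\<^sup>*\<^sup>*"

inductive_cases par_VarE: "par D (Var i) t"
inductive_cases par_UnivE: "par D (Univ i) t"
inductive_cases par_PiE: "par D (Pi A B) t"
inductive_cases par_LabE: "par D (Lab l Ms) t"

lemma par_AppE:
  assumes "par D (App M N) t"
  obtains (App) M' N' where "t = App M' N'" "par D M M'" "par D N N'"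
  | (beta) l As A L B Ms Ms' N' where "M = Lab l Ms" "(l, As, A, L, B) \<in> set D"
      "length Ms = length As" "list_all2 (par D) Ms Ms'" "par D N N'" "t = subst (inst (Ms' @ [N'])) L"
  using assms by cases auto

lemma par_refl: "par D t t"
proof (induction t)
  case (Lab l Ms)
  then show ?case by (auto intro!: par_Lab list.rel_refl_strong)
qed (auto intro: par.intros)

lemma par_ren: "par D t t' \<Longrightarrow> lctx_ok D \<Longrightarrow> par D (ren f t) (ren f t')"
proof (induction arbitrary: f rule: par.induct)
  case (par_Lab Ms Ms' l)
  then have "list_all2 (par D) (map (ren f) Ms) (map (ren f) Ms')"
    by (auto simp: list.rel_map elim!: list_all2_mono)
  then show ?case by (simp add: par.par_Lab)
next
  case (par_beta l As A L B Ms Ms' N N')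
  have Ms: "list_all2 (par D) (map (ren f) Ms) (map (ren f) Ms')"
    using par_beta.IH(1) par_beta.prems by (auto simp: list.rel_map elim!: list_all2_mono)
  have "scoped (length (Ms' @ [N'])) L"
    using lctx_okD[OF par_beta.prems par_beta.hyps(1)] par_beta.hyps(2)
      list_all2_lengthD[OF par_beta.IH(1)] by simp
  moreover have "par D (App (Lab l (map (ren f) Ms)) (ren f N))
      (subst (inst (map (ren f) (Ms' @ [N']))) L)"
    using par.par_beta[OF par_beta.hyps(1) _ Ms] par_beta.hyps(2) par_beta.IH(2) par_beta.prems
    by simp
  ultimately show ?case by (simp add: ren_subst_inst_scoped)
qed (auto intro: par.intros)

lemma par_subst:
  "par D t t' \<Longrightarrow> lctx_ok D \<Longrightarrow> (\<And>k. par D (\<sigma> k) (\<sigma>' k)) \<Longrightarrow> par D (subst \<sigma> t) (subst \<sigma>' t')"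
proof (induction arbitrary: \<sigma> \<sigma>' rule: par.induct)
  case (par_Pi A A' B B')
  have "par D (up \<sigma> k) (up \<sigma>' k)" for k
    using par_Pi.prems by (cases k) (simp_all add: up_def lift_def par_ren par.par_Var)
  then show ?case using par_Pi by (simp add: par.par_Pi)
next
  case (par_Lab Ms Ms' l)
  then have "list_all2 (par D) (map (subst \<sigma>) Ms) (map (subst \<sigma>') Ms')"
    by (auto simp: list.rel_map elim!: list_all2_mono)
  then show ?case by (simp add: par.par_Lab)
next
  case (par_beta l As A L B Ms Ms' N N')
  have Ms: "list_all2 (par D) (map (subst \<sigma>) Ms) (map (subst \<sigma>') Ms')"
    using par_beta.IH(1) par_beta.prems by (auto simp: list.rel_map elim!: list_all2_mono)
  have "scoped (length (Ms' @ [N'])) L"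
    using lctx_okD[OF par_beta.prems(1) par_beta.hyps(1)] par_beta.hyps(2)
      list_all2_lengthD[OF par_beta.IH(1)] by simp
  moreover have "par D (App (Lab l (map (subst \<sigma>) Ms)) (subst \<sigma> N))
      (subst (inst (map (subst \<sigma>') (Ms' @ [N']))) L)"
    using par.par_beta[OF par_beta.hyps(1) _ Ms] par_beta.hyps(2) par_beta.IH(2) par_beta.prems
    by simp
  ultimately show ?case by (simp add: subst_subst_inst_scoped)
qed (auto intro: par.intros)

lemma par_subst_inst:
  "lctx_ok D \<Longrightarrow> list_all2 (par D) Ms Ms' \<Longrightarrow> par D (subst (inst Ms) L) (subst (inst Ms') L)"
  by (rule par_subst[OF par_refl])
    (auto simp: inst_def list_all2_lengthD list_all2_rev list_all2_nthD intro: par.intros)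

lemma list_all2_diamond:
  assumes "list_all2 (\<lambda>x y. R x y \<and> (\<forall>z. R x z \<longrightarrow> (\<exists>w. R y w \<and> R z w))) xs ys"
    and "list_all2 R xs zs"
  shows "\<exists>ws. list_all2 R ys ws \<and> list_all2 R zs ws"
  using assms
proof (induction xs arbitrary: ys zs)
  case (Cons x xs)
  obtain y ys' z zs' where yz: "ys = y # ys'" "zs = z # zs'"
    using Cons.prems by (cases ys; cases zs) auto
  from Cons.prems yz obtain w where "R y w" "R z w" by auto
  moreover from Cons yz obtain ws where "list_all2 R ys' ws" "list_all2 R zs' ws" by fastforce
  ultimately show ?case using yz by (intro exI[of _ "w # ws"]) auto
qed simp

definition par_diamond_at :: "lctx \<Rightarrow> trm \<Rightarrow> trm \<Rightarrow> bool" where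
  "par_diamond_at D t t1 \<longleftrightarrow> (\<forall>t2. par D t t2 \<longrightarrow> (\<exists>t3. par D t1 t3 \<and> par D t2 t3))"

lemma list_all2_par_diamond_at:
  "list_all2 (\<lambda>x y. par D x y \<and> par_diamond_at D x y) xs ys \<Longrightarrow> list_all2 (par D) xs zs \<Longrightarrow>
   \<exists>ws. list_all2 (par D) ys ws \<and> list_all2 (par D) zs ws"
  unfolding par_diamond_at_def by (rule list_all2_diamond)

lemma par_diamond_at_App:
  assumes ok: "lctx_ok D" and M: "par D M M1" "par_diamond_at D M M1" and N: "par_diamond_at D N N1"
  shows "par_diamond_at D (App M N) (App M1 N1)"
  unfolding par_diamond_at_def
proof (intro allI impI)
  fix t2
  assume "par D (App M N) t2"
  then show "\<exists>t3. par D (App M1 N1) t3 \<and> par D t2 t3"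
  proof (cases rule: par_AppE)
    case (App M2 N2)
    with M N obtain M3 N3 where "par D M1 M3" "par D M2 M3" "par D N1 N3" "par D N2 N3"
      unfolding par_diamond_at_def by blast
    then show ?thesis using App by (blast intro: par_App)
  next
    case (beta l As A L B Ms Ms2 N2)
    from M(1) obtain Ms1 where Ms1: "M1 = Lab l Ms1" "list_all2 (par D) Ms Ms1"
      using beta by (auto elim: par_LabE)
    have "par D M (Lab l Ms2)" using beta by (simp add: par_Lab)
    with M(2) obtain M3 where "par D M1 M3" "par D (Lab l Ms2) M3"
      unfolding par_diamond_at_def by blast
    with Ms1 obtain Ms3 where Ms3: "list_all2 (par D) Ms1 Ms3" "list_all2 (par D) Ms2 Ms3"
      by (auto elim!: par_LabE)
    from N beta obtain N3 where N3: "par D N1 N3" "par D N2 N3" unfolding par_diamond_at_def by blast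
    have "length Ms1 = length As" using list_all2_lengthD[OF Ms1(2)] beta(3) by simp
    then have "par D (App M1 N1) (subst (inst (Ms3 @ [N3])) L)"
      unfolding Ms1(1) using par_beta[OF beta(2)] Ms3(1) N3(1) by blast
    moreover have "par D t2 (subst (inst (Ms3 @ [N3])) L)"
      unfolding beta(6) using par_subst_inst ok Ms3(2) N3(2) by (blast intro: list_all2_appendI)
    ultimately show ?thesis by blast
  qed
qed

lemma par_diamond_at_beta:
  assumes ok: "lctx_ok D" and entry: "(l, As, A, L, B) \<in> set D" "length Ms = length As"
    and Ms: "list_all2 (\<lambda>x y. par D x y \<and> par_diamond_at D x y) Ms Ms1"
    and N: "par_diamond_at D N N1"
  shows "par_diamond_at D (App (Lab l Ms) N) (subst (inst (Ms1 @ [N1])) L)"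
  unfolding par_diamond_at_def
proof (intro allI impI)
  fix t2
  assume "par D (App (Lab l Ms) N) t2"
  then obtain Ms3 N3 where "list_all2 (par D) Ms1 Ms3" "par D N1 N3"
    "par D t2 (subst (inst (Ms3 @ [N3])) L)"
  proof (cases rule: par_AppE)
    case (App M2 N2)
    from \<open>par D (Lab l Ms) M2\<close> obtain Ms2 where Ms2: "M2 = Lab l Ms2" "list_all2 (par D) Ms Ms2"
      by (auto elim: par_LabE)
    from list_all2_par_diamond_at[OF Ms Ms2(2)] obtain Ms3
      where Ms3: "list_all2 (par D) Ms1 Ms3" "list_all2 (par D) Ms2 Ms3" by blast
    from N App obtain N3 where N3: "par D N1 N3" "par D N2 N3" unfolding par_diamond_at_def by blast
    have "length Ms2 = length As" using list_all2_lengthD[OF Ms2(2)] entry(2) by simp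
    then have "par D t2 (subst (inst (Ms3 @ [N3])) L)"
      unfolding App(1) Ms2(1) using par_beta[OF entry(1)] Ms3(2) N3(2) by blast
    then show ?thesis using that Ms3(1) N3(1) by blast
  next
    case (beta l' As' A' L' B' Ms' Ms2 N2)
    then have "L' = L" using lctx_ok_unique[OF ok] entry(1) by fastforce
    from list_all2_par_diamond_at[OF Ms] beta obtain Ms3
      where Ms3: "list_all2 (par D) Ms1 Ms3" "list_all2 (par D) Ms2 Ms3" by auto
    from N beta obtain N3 where N3: "par D N1 N3" "par D N2 N3" unfolding par_diamond_at_def by blast
    have "par D t2 (subst (inst (Ms3 @ [N3])) L)"
      unfolding beta(6) \<open>L' = L\<close> using ok Ms3(2) N3(2)
      by (blast intro: par_subst_inst list_all2_appendI)
    then show ?thesis using that Ms3(1) N3(1) by blast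
  qed
  moreover have "par D (subst (inst (Ms1 @ [N1])) L) (subst (inst (Ms3 @ [N3])) L)"
    if "list_all2 (par D) Ms1 Ms3" "par D N1 N3" for Ms3 N3
    using par_subst_inst ok that by (blast intro: list_all2_appendI)
  ultimately show "\<exists>t3. par D (subst (inst (Ms1 @ [N1])) L) t3 \<and> par D t2 t3" by blast
qed

lemma par_diamond: "par D t t1 \<Longrightarrow> lctx_ok D \<Longrightarrow> par_diamond_at D t t1"
proof (induction rule: par.induct)
  case (par_Pi A A' B B')
  then show ?case unfolding par_diamond_at_def by (blast elim: par_PiE intro: par.par_Pi)
next
  case (par_Lab Ms Ms' l)
  then have IH: "list_all2 (\<lambda>x y. par D x y \<and> par_diamond_at D x y) Ms Ms'"
    by (auto elim!: list_all2_mono)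
  show ?case
    unfolding par_diamond_at_def
  proof (intro allI impI)
    fix t2
    assume "par D (Lab l Ms) t2"
    then obtain Ms2 where "t2 = Lab l Ms2" "list_all2 (par D) Ms Ms2" by (auto elim: par_LabE)
    with list_all2_par_diamond_at[OF IH] show "\<exists>t3. par D (Lab l Ms') t3 \<and> par D t2 t3"
      by (blast intro: par.par_Lab)
  qed
next
  case (par_App M M' N N')
  then show ?case by (simp add: par_diamond_at_App)
next
  case (par_beta l As A L B Ms Ms' N N')
  then have "list_all2 (\<lambda>x y. par D x y \<and> par_diamond_at D x y) Ms Ms'"
    by (auto elim!: list_all2_mono)
  with par_beta show ?case by (simp add: par_diamond_at_beta)
qed (auto simp: par_diamond_at_def elim: par_VarE par_UnivE)

lemma confluentp_par:
  assumes "lctx_ok D"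
  shows "confluentp (par D)"
proof (intro strong_confluentp_imp_confluentp strong_confluentpI)
  fix x y z
  assume "par D x y" "par D x z"
  then obtain u where "par D y u" "par D z u"
    using par_diamond[OF _ assms] unfolding par_diamond_at_def by blast
  then show "\<exists>u. (par D)\<^sup>*\<^sup>* y u \<and> (par D)\<^sup>=\<^sup>= z u" by blast
qed

section \<open>Multi-step reduction and joinability\<close>

lemma rtranclp_map:
  assumes "\<And>x y. r x y \<Longrightarrow> s (f x) (f y)" and "r\<^sup>*\<^sup>* x y"
  shows "s\<^sup>*\<^sup>* (f x) (f y)"
  using assms(2) by induction (auto intro: rtranclp.rtrancl_into_rtrancl assms(1))

lemma list_all2_rtranclp:
  assumes "\<And>x. r x x" and "list_all2 r\<^sup>*\<^sup>* xs ys"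
  shows "(list_all2 r)\<^sup>*\<^sup>* xs ys"
  using assms(2)
proof (induction rule: list_all2_induct)
  case (Cons x xs y ys)
  have "(list_all2 r)\<^sup>*\<^sup>* (x # xs) (y # xs)"
    by (rule rtranclp_map[OF _ Cons(1)]) (simp add: assms(1) list.rel_refl)
  moreover have "(list_all2 r)\<^sup>*\<^sup>* (y # xs) (y # ys)"
    by (rule rtranclp_map[OF _ Cons(3)]) (simp add: assms(1))
  ultimately show ?case by simp
qed simp

lemma red_par: "red D t t' \<Longrightarrow> par D t t'"
  by (induction rule: red.induct) (auto intro!: par.intros par_refl list.rel_refl_strong)

lemma par_reds: "par D t t' \<Longrightarrow> reds D t t'"
proof (induction rule: par.induct)
  case (par_Lab Ms Ms' l)
  then show ?case by (auto intro: reds_lab elim!: list_all2_mono)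
next
  case (par_beta l As A L B Ms Ms' N N')
  then have "reds D (App (Lab l Ms) N) (App (Lab l Ms') N')"
    by (auto intro!: reds_app reds_lab elim!: list_all2_mono)
  moreover have "reds D (App (Lab l Ms') N') (subst (inst (Ms' @ [N'])) L)"
    using par_beta.hyps list_all2_lengthD[OF par_beta.IH(1)] by (auto intro: reds_step red_lab)
  ultimately show ?case by (rule reds_trans)
qed (auto intro: reds.intros)

lemma reds_iff_pars: "reds D t t' \<longleftrightarrow> pars D t t'"
proof
  show "reds D t t' \<Longrightarrow> pars D t t'"
  proof (induction rule: reds.induct)
    case (reds_pi D A A' B B')
    have "pars D (Pi A B) (Pi A' B)" "pars D (Pi A' B) (Pi A' B')"
      by (rule rtranclp_map[OF _ reds_pi.IH(1)] rtranclp_map[OF _ reds_pi.IH(2)];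
          simp add: par_Pi par_refl)+
    then show ?case by simp
  next
    case (reds_app D M M' N N')
    have "pars D (App M N) (App M' N)" "pars D (App M' N) (App M' N')"
      by (rule rtranclp_map[OF _ reds_app.IH(1)] rtranclp_map[OF _ reds_app.IH(2)];
          simp add: par_App par_refl)+
    then show ?case by simp
  next
    case (reds_lab D Ms Ms' l)
    then have "(list_all2 (par D))\<^sup>*\<^sup>* Ms Ms'"
      by (auto intro: list_all2_rtranclp par_refl elim: list_all2_mono)
    then show ?case by (rule rtranclp_map[rotated]) (rule par_Lab)
  qed (auto intro: red_par)
  show "pars D t t' \<Longrightarrow> reds D t t'"
    by (induction rule: rtranclp_induct) (auto intro: reds.intros par_reds)
qed

definition joinable :: "lctx \<Rightarrow> trm \<Rightarrow> trm \<Rightarrow> bool" where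
  "joinable D a b \<longleftrightarrow> (\<exists>c. reds D a c \<and> reds D b c)"

lemma reds_confluent: "lctx_ok D \<Longrightarrow> reds D t t1 \<Longrightarrow> reds D t t2 \<Longrightarrow> joinable D t1 t2"
  unfolding joinable_def reds_iff_pars by (rule confluentpD[OF confluentp_par])

lemma reds_joinable: "reds D a b \<Longrightarrow> joinable D a b"
  unfolding joinable_def by (blast intro: reds.intros)

lemma joinable_refl: "joinable D a a"
  unfolding joinable_def by (blast intro: reds_refl)

lemma joinable_sym: "joinable D a b \<Longrightarrow> joinable D b a"
  unfolding joinable_def by blast

lemma joinable_trans: "lctx_ok D \<Longrightarrow> joinable D a b \<Longrightarrow> joinable D b c \<Longrightarrow> joinable D a c"
  unfolding joinable_def by (meson reds_confluent[unfolded joinable_def] reds_trans)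

lemma joinable_reds:
  "lctx_ok D \<Longrightarrow> joinable D a b \<Longrightarrow> reds D a a' \<Longrightarrow> reds D b b' \<Longrightarrow> joinable D a' b'"
  by (meson reds_joinable joinable_sym joinable_trans)

lemma reds_subst: "lctx_ok D \<Longrightarrow> reds D t t' \<Longrightarrow> reds D (subst \<sigma> t) (subst \<sigma> t')"
  unfolding reds_iff_pars by (erule rtranclp_map[rotated]) (simp add: par_subst par_refl)

lemma joinable_subst: "lctx_ok D \<Longrightarrow> joinable D t t' \<Longrightarrow> joinable D (subst \<sigma> t) (subst \<sigma> t')"
  unfolding joinable_def using reds_subst by blast

lemma reds_UnivD: "reds D (Univ j) t \<Longrightarrow> t = Univ j"
  unfolding reds_iff_pars by (induction rule: rtranclp_induct) (auto elim: par_UnivE)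

lemma reds_PiD: "reds D (Pi A B) t \<Longrightarrow> \<exists>A' B'. t = Pi A' B' \<and> reds D A A' \<and> reds D B B'"
  unfolding reds_iff_pars
  by (induction rule: rtranclp_induct) (auto elim!: par_PiE intro: rtranclp.rtrancl_into_rtrancl)

lemma reds_LabD: "reds D (Lab l Ms) t \<Longrightarrow> \<exists>Ms'. t = Lab l Ms'"
  unfolding reds_iff_pars by (induction rule: rtranclp_induct) (auto elim!: par_LabE)

lemma joinable_Univ_Univ: "joinable D (Univ i) (Univ j) \<Longrightarrow> i = j"
  unfolding joinable_def by (auto dest!: reds_UnivD)

lemma not_joinable_Univ_Pi: "\<not> joinable D (Univ i) (Pi A B)"
  unfolding joinable_def by (auto dest!: reds_UnivD reds_PiD)

lemma not_joinable_Univ_Lab: "\<not> joinable D (Univ i) (Lab l Ms)"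
  unfolding joinable_def by (auto dest!: reds_UnivD reds_LabD)

lemma not_joinable_Pi_Lab: "\<not> joinable D (Pi A B) (Lab l Ms)"
  unfolding joinable_def by (auto dest!: reds_PiD reds_LabD)

lemma joinable_Lab_Lab: "joinable D (Lab l Ms) (Lab l' Ms') \<Longrightarrow> l = l'"
  unfolding joinable_def by (auto dest!: reds_LabD)

lemma joinable_Pi_Pi: "joinable D (Pi A B) (Pi A' B') \<Longrightarrow> joinable D A A' \<and> joinable D B B'"
  unfolding joinable_def by (auto dest!: reds_PiD)

lemma reds_mono: "reds D t t' \<Longrightarrow> set D \<subseteq> set D' \<Longrightarrow> reds D' t t'"
proof (induction rule: reds.induct)
  case (reds_step D M N)
  then show ?case by (auto elim!: red.cases intro: reds.reds_step red_lab)
next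
  case (reds_lab D Ms Ms' l)
  then show ?case by (auto intro: reds.reds_lab elim: list_all2_mono)
qed (auto intro: reds.intros)

lemma equiv_joinable_or_reds_Lab:
  "equiv \<Delta> X Y \<Longrightarrow> set \<Delta> \<subseteq> set D \<Longrightarrow>
   joinable D X Y \<or> (\<exists>l Ns. l \<in> fst ` set D \<and> (reds D X (Lab l Ns) \<or> reds D Y (Lab l Ns)))"
proof (induction rule: equiv.induct)
  case (eq_reduct \<Delta> M L N)
  then show ?case unfolding joinable_def using reds_mono by blast
next
  case (eq_eta1 \<Delta> L l Ns M M' As A N B)
  then have "l \<in> fst ` set D" by force
  then show ?case using eq_eta1 reds_mono by blast
next
  case (eq_eta2 \<Delta> L l Ns M M' As A N B)
  then have "l \<in> fst ` set D" by force
  then show ?case using eq_eta2 reds_mono by blast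
qed

section \<open>A reducibility model\<close>

locale fresh_label =
  fixes D :: lctx and c :: nat
  assumes lctx_ok: "lctx_ok D" and fresh: "c \<notin> fst ` set D"
begin

text \<open>\<open>interp_rel U i T P\<close>: \<open>T\<close> is a type at level \<open>i\<close> denoting the predicate \<open>P\<close> on terms,
  given the predicates \<open>U j\<close> of the types at the levels \<open>j < i\<close>.  The fresh label closure \<open>c{}\<close>
  denotes the empty type.\<close>

inductive interp_rel :: "(nat \<Rightarrow> trm \<Rightarrow> bool) \<Rightarrow> nat \<Rightarrow> trm \<Rightarrow> (trm \<Rightarrow> bool) \<Rightarrow> bool"
  for U :: "nat \<Rightarrow> trm \<Rightarrow> bool" and i :: nat where
  interp_Univ: "reds D T (Univ j) \<Longrightarrow> j < i \<Longrightarrow> interp_rel U i T (U j)"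
| interp_Pi: "reds D T (Pi A B) \<Longrightarrow> interp_rel U i A PA \<Longrightarrow>
    (\<forall>a. PA a \<longrightarrow> interp_rel U i (subst (inst [a]) B) (PB a)) \<Longrightarrow>
    interp_rel U i T (\<lambda>f. \<forall>a. PA a \<longrightarrow> PB a (App f a))"
| interp_empty: "reds D T (Lab c []) \<Longrightarrow> interp_rel U i T (\<lambda>_. False)"

lemma interp_rel_type_expand: "interp_rel U i T P \<Longrightarrow> reds D T0 T \<Longrightarrow> interp_rel U i T0 P"
  by (erule interp_rel.cases) (auto intro: interp_rel.intros reds_trans)

lemma interp_rel_unique:
  "interp_rel U i T P \<Longrightarrow> interp_rel U i T' Q \<Longrightarrow> joinable D T T' \<Longrightarrow> P = Q"
proof (induction arbitrary: T' Q rule: interp_rel.induct)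
  case (interp_Univ T j)
  note heads = joinable_reds[OF lctx_ok interp_Univ.prems(2) interp_Univ.hyps(1)]
  from interp_Univ.prems(1) show ?case
  proof cases
    case (interp_Univ j')
    with heads have "joinable D (Univ j) (Univ j')" by blast
    with interp_Univ show ?thesis by (auto dest: joinable_Univ_Univ)
  qed (use heads not_joinable_Univ_Pi not_joinable_Univ_Lab in blast)+
next
  case (interp_Pi T A B PA PB)
  note IH = interp_Pi.IH
  note heads = joinable_reds[OF lctx_ok interp_Pi.prems(2) interp_Pi.hyps(1)]
  from interp_Pi.prems(1) show ?case
  proof cases
    case (interp_Pi A' B' PA' PB')
    with heads have "joinable D (Pi A B) (Pi A' B')" by blast
    then have "joinable D A A'" "joinable D B B'" by (auto dest: joinable_Pi_Pi)
    have "PA = PA'" using IH(1) interp_Pi(3) \<open>joinable D A A'\<close> by blast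
    moreover have "PB a = PB' a" if "PA a" for a
    proof -
      have "joinable D (subst (inst [a]) B) (subst (inst [a]) B')"
        using joinable_subst[OF lctx_ok \<open>joinable D B B'\<close>] .
      moreover have "interp_rel U i (subst (inst [a]) B') (PB' a)"
        using interp_Pi(4) that \<open>PA = PA'\<close> by blast
      ultimately show ?thesis using IH(2) that by blast
    qed
    ultimately show ?thesis using interp_Pi by (auto simp: fun_eq_iff)
  qed (use heads not_joinable_Univ_Pi not_joinable_Pi_Lab joinable_sym in blast)+
next
  case (interp_empty T)
  note heads = joinable_reds[OF lctx_ok interp_empty.prems(2) interp_empty.hyps(1)]
  from interp_empty.prems(1) show ?case
    by cases (use heads not_joinable_Univ_Lab not_joinable_Pi_Lab joinable_sym in blast)+
qed

lemma interp_rel_mono: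
  "interp_rel U i T P \<Longrightarrow> i \<le> i' \<Longrightarrow> (\<And>j. j < i \<Longrightarrow> U' j = U j) \<Longrightarrow> interp_rel U' i' T P"
proof (induction rule: interp_rel.induct)
  case (interp_Univ T j)
  then have "interp_rel U' i' T (U' j)" by (intro interp_rel.interp_Univ) auto
  then show ?case using interp_Univ by simp
qed (auto intro: interp_rel.intros)

lemma interp_rel_expand:
  "interp_rel U i T P \<Longrightarrow> (\<And>j t t'. U j t' \<Longrightarrow> reds D t t' \<Longrightarrow> U j t) \<Longrightarrow>
   P t' \<Longrightarrow> reds D t t' \<Longrightarrow> P t"
proof (induction arbitrary: t t' rule: interp_rel.induct)
  case (interp_Pi T A B PA PB)
  then show ?case by (blast intro: reds_app reds_refl)
qed auto

lemma interp_rel_not_reds_Lab: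
  assumes "interp_rel U i T P" "reds D T (Lab l Ns)" "l \<in> fst ` set D"
  shows False
  using assms(1)
proof cases
  case interp_empty
  then have "joinable D (Lab l Ns) (Lab c [])" using reds_confluent[OF lctx_ok assms(2)] by blast
  then show False using fresh assms(3) by (auto dest: joinable_Lab_Lab)
qed (use reds_confluent[OF lctx_ok assms(2)] not_joinable_Univ_Lab not_joinable_Pi_Lab joinable_sym
  in blast)+

primrec lower_univs :: "nat \<Rightarrow> nat \<Rightarrow> trm \<Rightarrow> bool" where
  "lower_univs 0 = (\<lambda>j t. False)"
| "lower_univs (Suc n) = (\<lambda>j t. if j < n then lower_univs n j t
     else j = n \<and> (\<exists>Q. interp_rel (lower_univs n) n t Q))"

definition interp :: "nat \<Rightarrow> trm \<Rightarrow> (trm \<Rightarrow> bool) \<Rightarrow> bool" where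
  "interp i T P \<longleftrightarrow> interp_rel (lower_univs i) i T P"

lemma lower_univs_iff: "lower_univs n j t \<longleftrightarrow> j < n \<and> (\<exists>Q. interp j t Q)"
  by (induction n) (auto simp: interp_def less_Suc_eq)

lemma interp_mono: "interp i T P \<Longrightarrow> i \<le> k \<Longrightarrow> interp k T P"
  unfolding interp_def by (erule interp_rel_mono) (auto simp: lower_univs_iff fun_eq_iff)

lemma interp_unique: "interp i T P \<Longrightarrow> interp k T' Q \<Longrightarrow> joinable D T T' \<Longrightarrow> P = Q"
  using interp_mono[of i T P "max i k"] interp_mono[of k T' Q "max i k"]
  by (auto simp: interp_def intro: interp_rel_unique)

lemma interp_type_expand: "interp i T P \<Longrightarrow> reds D T0 T \<Longrightarrow> interp i T0 P"
  unfolding interp_def by (rule interp_rel_type_expand)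

lemma interp_expand: "interp i T P \<Longrightarrow> P t' \<Longrightarrow> reds D t t' \<Longrightarrow> P t"
  unfolding interp_def by (erule interp_rel_expand) (auto simp: lower_univs_iff intro: interp_type_expand)

lemma interp_not_reds_Lab: "interp i T P \<Longrightarrow> reds D T (Lab l Ns) \<Longrightarrow> l \<in> fst ` set D \<Longrightarrow> False"
  unfolding interp_def by (rule interp_rel_not_reds_Lab)

lemma interp_Univ:
  assumes "i < k"
  shows "interp k (Univ i) (\<lambda>t. \<exists>Q. interp i t Q)"
proof -
  have "interp k (Univ i) (lower_univs k i)"
    unfolding interp_def by (rule interp_rel.interp_Univ[OF reds_refl assms])
  moreover have "lower_univs k i = (\<lambda>t. \<exists>Q. interp i t Q)"
    using assms by (simp add: fun_eq_iff lower_univs_iff)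
  ultimately show ?thesis by simp
qed

lemma interp_UnivD:
  assumes "interp k (Univ i) P"
  shows "P = (\<lambda>t. \<exists>Q. interp i t Q)"
  using assms[unfolded interp_def]
  by cases (auto dest!: reds_UnivD simp: lower_univs_iff fun_eq_iff)

lemma interp_PiI:
  "interp k A PA \<Longrightarrow> (\<And>a. PA a \<Longrightarrow> interp k (subst (inst [a]) B) (PB a)) \<Longrightarrow>
   interp k (Pi A B) (\<lambda>f. \<forall>a. PA a \<longrightarrow> PB a (App f a))"
  unfolding interp_def by (blast intro: interp_rel.interp_Pi reds_refl)

lemma interp_PiE:
  assumes "interp k (Pi A B) P"
  obtains PA PB where "interp k A PA" "\<And>a. PA a \<Longrightarrow> interp k (subst (inst [a]) B) (PB a)"
    "P = (\<lambda>f. \<forall>a. PA a \<longrightarrow> PB a (App f a))"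
  using assms unfolding interp_def
proof (cases rule: interp_rel.cases)
  case (interp_Pi A' B' PA PB)
  then obtain "reds D A A'" "reds D B B'" by (auto dest: reds_PiD)
  with interp_Pi show ?thesis
    by (intro that[of PA PB]) (auto simp: interp_def intro: interp_rel_type_expand reds_subst[OF lctx_ok])
qed (auto dest!: reds_PiD reds_LabD)

lemma interp_empty_Lab: "interp i (Lab c []) (\<lambda>_. False)"
  unfolding interp_def by (rule interp_empty[OF reds_refl])

section \<open>Semantic typing\<close>

definition sem_type :: "trm \<Rightarrow> (trm \<Rightarrow> bool) \<Rightarrow> bool" where
  "sem_type T P \<longleftrightarrow> (\<exists>i. interp i T P)"

definition sem_subst :: "(nat \<Rightarrow> trm) \<Rightarrow> tctx \<Rightarrow> bool" where
  "sem_subst \<sigma> \<Gamma> \<longleftrightarrow> (\<forall>k<length \<Gamma>. \<exists>P. sem_type (subst \<sigma> (lift (Suc k) (\<Gamma> ! k))) P \<and> P (\<sigma> k))"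

definition sem_typing :: "tctx \<Rightarrow> trm \<Rightarrow> trm \<Rightarrow> bool" where
  "sem_typing \<Gamma> M T \<longleftrightarrow> (\<forall>\<sigma>. sem_subst \<sigma> \<Gamma> \<longrightarrow> (\<exists>P. sem_type (subst \<sigma> T) P \<and> P (subst \<sigma> M)))"

definition sem_entry :: "trm list \<Rightarrow> trm \<Rightarrow> trm \<Rightarrow> trm \<Rightarrow> bool" where
  "sem_entry As A L B \<longleftrightarrow> (\<exists>i. sem_typing (rev As) (Pi A B) (Univ i)) \<and> sem_typing (A # rev As) L B"

definition sem_lctx :: "lctx \<Rightarrow> bool" where
  "sem_lctx \<Delta> \<longleftrightarrow> (\<forall>l As A L B. (l, As, A, L, B) \<in> set \<Delta> \<longrightarrow> sem_entry As A L B)"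

lemma sem_type_unique: "sem_type T P \<Longrightarrow> sem_type T' Q \<Longrightarrow> joinable D T T' \<Longrightarrow> P = Q"
  unfolding sem_type_def using interp_unique by blast

lemma sem_type_Univ_iff: "sem_type (Univ i) P \<longleftrightarrow> P = (\<lambda>t. \<exists>Q. interp i t Q)"
  unfolding sem_type_def using interp_UnivD interp_Univ[of i "Suc i"] by blast

lemma sem_typing_Univ_iff:
  "sem_typing \<Gamma> A (Univ i) \<longleftrightarrow> (\<forall>\<sigma>. sem_subst \<sigma> \<Gamma> \<longrightarrow> (\<exists>Q. interp i (subst \<sigma> A) Q))"
  by (simp add: sem_typing_def sem_type_Univ_iff)

lemma sem_subst_scons:
  assumes "sem_subst \<sigma> \<Gamma>" "sem_type (subst \<sigma> A) P" "P a"
  shows "sem_subst (scons a \<sigma>) (A # \<Gamma>)"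
  unfolding sem_subst_def
proof (intro allI impI)
  fix k
  assume "k < length (A # \<Gamma>)"
  then show "\<exists>P. sem_type (subst (scons a \<sigma>) (lift (Suc k) ((A # \<Gamma>) ! k))) P \<and> P (scons a \<sigma> k)"
    using assms by (cases k) (auto simp: subst_scons_lift_Suc lift_0 sem_subst_def)
qed

lemma sem_subst_inst:
  assumes scoped: "scoped_ctx (rev As)" and len: "length Ms = length As"
    and args: "\<And>k. k < length Ms \<Longrightarrow>
      \<exists>P. sem_type (subst \<sigma> (subst (inst (take k Ms)) (As ! k))) P \<and> P (subst \<sigma> (Ms ! k))"
  shows "sem_subst (inst (map (subst \<sigma>) Ms)) (rev As)"
  unfolding sem_subst_def
proof (intro allI impI)
  fix m
  assume "m < length (rev As)"
  define k where "k = length As - Suc m"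
  let ?Ms' = "map (subst \<sigma>) Ms"
  have m: "m < length As" and k: "k < length As" using \<open>m < _\<close> by (simp_all add: k_def)
  have rev_As: "rev As ! m = As ! k" using m by (simp add: rev_nth k_def)
  have scoped_k: "scoped k (As ! k)"
    using scoped m rev_As unfolding scoped_ctx_def by (auto simp: k_def)
  have "subst (inst ?Ms') (lift (Suc m) (As ! k)) = subst (inst (map (subst \<sigma>) (take k Ms))) (As ! k)"
    unfolding lift_def subst_ren
  proof (rule subst_cong_scoped[OF scoped_k])
    fix p
    assume "p < k"
    then show "(inst ?Ms' \<circ> (\<lambda>j. j + Suc m)) p = inst (map (subst \<sigma>) (take k Ms)) p"
      using len m by (auto simp: inst_def rev_nth k_def ac_simps)
  qed
  also have "\<dots> = subst \<sigma> (subst (inst (take k Ms)) (As ! k))"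
    using scoped_k len k by (simp add: subst_subst_inst_scoped)
  finally have type:
      "subst (inst ?Ms') (lift (Suc m) (rev As ! m)) = subst \<sigma> (subst (inst (take k Ms)) (As ! k))"
    using rev_As by simp
  have "inst ?Ms' m = subst \<sigma> (Ms ! k)" using m len by (simp add: inst_def rev_nth k_def)
  then show "\<exists>P. sem_type (subst (inst ?Ms') (lift (Suc m) (rev As ! m))) P \<and> P (inst ?Ms' m)"
    using args[of k] k len type by simp
qed

text \<open>No interpreted type reduces to a label of \<open>D\<close>, so the eta rules of \<open>equiv\<close> never apply
  between interpreted types.\<close>

lemma sem_type_equiv:
  assumes "equiv \<Delta> A B" "set \<Delta> \<subseteq> set D" "sem_type (subst \<sigma> A) P" "sem_type (subst \<sigma> B) Q"
  shows "P = Q"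
  using equiv_joinable_or_reds_Lab[OF assms(1,2)]
proof
  assume "joinable D A B"
  then show ?thesis using assms(3,4) joinable_subst[OF lctx_ok] sem_type_unique by blast
next
  assume "\<exists>l Ns. l \<in> fst ` set D \<and> (reds D A (Lab l Ns) \<or> reds D B (Lab l Ns))"
  then obtain l Ns where "l \<in> fst ` set D" "reds D A (Lab l Ns) \<or> reds D B (Lab l Ns)" by blast
  then have "reds D (subst \<sigma> A) (Lab l (map (subst \<sigma>) Ns)) \<or>
      reds D (subst \<sigma> B) (Lab l (map (subst \<sigma>) Ns))"
    by (auto dest: reds_subst[OF lctx_ok, where \<sigma> = \<sigma>])
  then show ?thesis
    using assms(3,4) \<open>l \<in> fst ` set D\<close> interp_not_reds_Lab unfolding sem_type_def by blast
qed

lemma sem_typing_Var: "i < length \<Gamma> \<Longrightarrow> sem_typing \<Gamma> (Var i) (lift (Suc i) (\<Gamma> ! i))"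
  by (auto simp: sem_typing_def sem_subst_def)

lemma sem_typing_Univ: "sem_typing \<Gamma> (Univ i) (Univ (Suc i))"
  using interp_Univ[of i "Suc i"] by (auto simp: sem_typing_Univ_iff)

lemma sem_typing_Pi:
  assumes A: "sem_typing \<Gamma> A (Univ i)" and B: "sem_typing (A # \<Gamma>) B (Univ j)"
  shows "sem_typing \<Gamma> (Pi A B) (Univ (max i j))"
  unfolding sem_typing_Univ_iff
proof (intro allI impI)
  fix \<sigma>
  assume \<sigma>: "sem_subst \<sigma> \<Gamma>"
  then obtain PA where PA: "interp i (subst \<sigma> A) PA" using A by (auto simp: sem_typing_Univ_iff)
  have "\<exists>Q. interp (max i j) (subst (inst [a]) (subst (up \<sigma>) B)) Q" if "PA a" for a
  proof -
    have "sem_subst (scons a \<sigma>) (A # \<Gamma>)"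
      using sem_subst_scons[OF \<sigma>, of A PA a] PA that by (auto simp: sem_type_def)
    then obtain Q where "interp j (subst (scons a \<sigma>) B) Q" using B by (auto simp: sem_typing_Univ_iff)
    then have "interp (max i j) (subst (scons a \<sigma>) B) Q" by (rule interp_mono) simp
    then show ?thesis by (auto simp: subst_inst_up)
  qed
  then obtain PB where PB: "\<And>a. PA a \<Longrightarrow> interp (max i j) (subst (inst [a]) (subst (up \<sigma>) B)) (PB a)"
    by metis
  have "interp (max i j) (subst \<sigma> A) PA" using PA by (rule interp_mono) simp
  from interp_PiI[OF this PB] show "\<exists>Q. interp (max i j) (subst \<sigma> (Pi A B)) Q" by auto
qed

lemma sem_typing_App:
  assumes M: "sem_typing \<Gamma> M (Pi A B)" and N: "sem_typing \<Gamma> N A"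
  shows "sem_typing \<Gamma> (App M N) (subst (inst [N]) B)"
  unfolding sem_typing_def
proof (intro allI impI)
  fix \<sigma>
  assume \<sigma>: "sem_subst \<sigma> \<Gamma>"
  then obtain k P where P: "interp k (Pi (subst \<sigma> A) (subst (up \<sigma>) B)) P" "P (subst \<sigma> M)"
    using M by (auto simp: sem_typing_def sem_type_def)
  from P(1) obtain PA PB where PA: "interp k (subst \<sigma> A) PA"
    and PB: "\<And>a. PA a \<Longrightarrow> interp k (subst (inst [a]) (subst (up \<sigma>) B)) (PB a)"
    and P_eq: "P = (\<lambda>f. \<forall>a. PA a \<longrightarrow> PB a (App f a))"
    by (rule interp_PiE) blast
  obtain P' where P': "sem_type (subst \<sigma> A) P'" "P' (subst \<sigma> N)"
    using N \<sigma> by (auto simp: sem_typing_def)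
  have "P' = PA" using sem_type_unique[OF P'(1) _ joinable_refl] PA by (auto simp: sem_type_def)
  with P'(2) have "PA (subst \<sigma> N)" by simp
  with P PB P_eq show "\<exists>P. sem_type (subst \<sigma> (subst (inst [N]) B)) P \<and> P (subst \<sigma> (App M N))"
    by (auto simp: sem_type_def subst_subst_inst_single)
qed

lemma sem_typing_conv:
  assumes "sem_typing \<Gamma> M A" "equiv \<Delta> A B" "set \<Delta> \<subseteq> set D" "sem_typing \<Gamma> B (Univ i)"
  shows "sem_typing \<Gamma> M B"
  unfolding sem_typing_def
proof (intro allI impI)
  fix \<sigma>
  assume \<sigma>: "sem_subst \<sigma> \<Gamma>"
  then obtain P where P: "sem_type (subst \<sigma> A) P" "P (subst \<sigma> M)"
    using assms(1) by (auto simp: sem_typing_def)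
  obtain i Q where "interp i (subst \<sigma> B) Q"
    using assms(4) \<sigma> by (auto simp: sem_typing_Univ_iff)
  then have Q: "sem_type (subst \<sigma> B) Q" by (auto simp: sem_type_def)
  with P show "\<exists>P. sem_type (subst \<sigma> B) P \<and> P (subst \<sigma> M)"
    using sem_type_equiv[OF assms(2,3) P(1) Q] by blast
qed

lemma sem_typing_Lab:
  assumes entry: "(l, As, A, L, B) \<in> set D" "sem_entry As A L B" and len: "length Ms = length As"
    and args: "\<And>k. k < length Ms \<Longrightarrow> sem_typing \<Gamma> (Ms ! k) (subst (inst (take k Ms)) (As ! k))"
  shows "sem_typing \<Gamma> (Lab l Ms) (subst (inst Ms) (Pi A B))"
  unfolding sem_typing_def
proof (intro allI impI)
  fix \<sigma>
  assume \<sigma>: "sem_subst \<sigma> \<Gamma>"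
  let ?Ms' = "map (subst \<sigma>) Ms"
  have scoped: "scoped (length As) (Pi A B)" "scoped_ctx (rev As)"
    using lctx_okD[OF lctx_ok entry(1)] by auto
  have Ms': "sem_subst (inst ?Ms') (rev As)"
    using sem_subst_inst[OF scoped(2) len] args \<sigma> by (auto simp: sem_typing_def)
  then obtain k Q where "interp k (Pi (subst (inst ?Ms') A) (subst (up (inst ?Ms')) B)) Q"
    using entry(2) by (auto simp: sem_entry_def sem_typing_Univ_iff)
  then obtain PA PB where PA: "interp k (subst (inst ?Ms') A) PA"
    and PB: "\<And>a. PA a \<Longrightarrow> interp k (subst (inst [a]) (subst (up (inst ?Ms')) B)) (PB a)"
    and Q: "Q = (\<lambda>f. \<forall>a. PA a \<longrightarrow> PB a (App f a))"
    by (rule interp_PiE) blast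
  have "PB a (App (Lab l ?Ms') a)" if "PA a" for a
  proof -
    have "sem_subst (inst (?Ms' @ [a])) (A # rev As)"
      unfolding inst_snoc using sem_subst_scons[OF Ms', of A PA a] PA that by (auto simp: sem_type_def)
    then obtain P where P: "sem_type (subst (inst (?Ms' @ [a])) B) P" "P (subst (inst (?Ms' @ [a])) L)"
      using entry(2) by (auto simp: sem_entry_def sem_typing_def)
    have "P = PB a"
      using sem_type_unique[OF P(1) _ joinable_refl] PB[OF that]
      by (auto simp: sem_type_def inst_snoc subst_inst_up)
    moreover have "reds D (App (Lab l ?Ms') a) (subst (inst (?Ms' @ [a])) L)"
      by (intro reds_step red_lab[OF entry(1)]) (simp add: len)
    ultimately show ?thesis using P(2) PB[OF that] interp_expand by blast
  qed
  moreover have "subst \<sigma> (subst (inst Ms) (Pi A B)) = subst (inst ?Ms') (Pi A B)"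
    using scoped(1) len by (simp only: subst_subst_inst_scoped)
  ultimately show "\<exists>P. sem_type (subst \<sigma> (subst (inst Ms) (Pi A B))) P \<and> P (subst \<sigma> (Lab l Ms))"
    using \<open>interp k _ Q\<close> Q by (auto simp: sem_type_def)
qed

lemma typing_sound:
  "typing \<Delta> \<Gamma> M T \<Longrightarrow> set \<Delta> \<subseteq> set D \<Longrightarrow> sem_lctx \<Delta> \<and> sem_typing \<Gamma> M T"
  "wf \<Delta> \<Gamma> \<Longrightarrow> set \<Delta> \<subseteq> set D \<Longrightarrow> sem_lctx \<Delta>"
proof (induction rule: typing_wf.inducts)
  case (t_var \<Delta> \<Gamma> i)
  then show ?case by (simp add: sem_typing_Var)
next
  case (t_univ \<Delta> \<Gamma> i)
  then show ?case by (simp add: sem_typing_Univ)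
next
  case (t_pi \<Delta> \<Gamma> A i B j)
  then show ?case by (simp add: sem_typing_Pi)
next
  case (t_app \<Delta> \<Gamma> M A B N)
  then show ?case by (blast intro: sem_typing_App)
next
  case (t_conv \<Delta> \<Gamma> M A B i)
  then show ?case by (blast intro: sem_typing_conv)
next
  case (t_lab \<Delta> \<Gamma> l As A L B Ms)
  then have "sem_lctx \<Delta>" and "(l, As, A, L, B) \<in> set D" by auto
  moreover from this have "sem_entry As A L B" using t_lab.hyps(2) by (simp add: sem_lctx_def)
  ultimately have "sem_typing \<Gamma> (Lab l Ms) (subst (inst Ms) (Pi A B))"
    using t_lab.hyps(3) t_lab.IH(2) t_lab.prems by (intro sem_typing_Lab) auto
  with \<open>sem_lctx \<Delta>\<close> show ?case by blast
next
  case wf_empty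
  then show ?case by (simp add: sem_lctx_def)
next
  case (wf_label \<Delta> As A B i M l)
  then have "sem_entry As A M B" by (auto simp: sem_entry_def)
  with wf_label show ?case by (auto simp: sem_lctx_def)
next
  case (wf_cons \<Delta> \<Gamma> A i)
  then show ?case by blast
qed

lemma not_sem_typing_Pi_Univ_Var: "\<not> sem_typing [] M (Pi (Univ i) (Var 0))"
proof
  assume M: "sem_typing [] M (Pi (Univ i) (Var 0))"
  have "sem_subst Var []" by (simp add: sem_subst_def)
  then have "\<exists>P. sem_type (subst Var (Pi (Univ i) (Var 0))) P \<and> P (subst Var M)"
    using M unfolding sem_typing_def by blast
  then obtain k P where P: "interp k (Pi (Univ i) (Var 0)) P" "P M"
    unfolding subst_Var sem_type_def by blast
  from P(1) obtain PA PB where PA: "interp k (Univ i) PA"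
    and PB: "\<And>a. PA a \<Longrightarrow> interp k (subst (inst [a]) (Var 0)) (PB a)"
    and P_eq: "P = (\<lambda>f. \<forall>a. PA a \<longrightarrow> PB a (App f a))"
    by (rule interp_PiE) blast
  have empty_type: "PA (Lab c [])" using interp_UnivD[OF PA] interp_empty_Lab by auto
  then have "interp k (Lab c []) (PB (Lab c []))" using PB by (simp add: inst_def)
  then have "PB (Lab c []) = (\<lambda>_. False)" using interp_unique interp_empty_Lab joinable_refl by blast
  moreover have "PB (Lab c []) (App M (Lab c []))" using P(2) P_eq empty_type by simp
  ultimately show False by simp
qed

end

theorem theorem3p24:
  shows "\<not> (\<exists>\<Delta> i M. typing \<Delta> [] M (Pi (Univ i) (Var 0)))"
proof
  assume "\<exists>\<Delta> i M. typing \<Delta> [] M (Pi (Univ i) (Var 0))"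
  then obtain \<Delta> i M where M: "typing \<Delta> [] M (Pi (Univ i) (Var 0))" by blast
  obtain c :: nat where "c \<notin> fst ` set \<Delta>"
    using ex_new_if_finite[OF infinite_UNIV_nat, of "fst ` set \<Delta>"] by blast
  moreover have "lctx_ok \<Delta>" using typing_scoped(1)[OF M] by blast
  ultimately interpret fresh_label \<Delta> c by unfold_locales
  have "sem_typing [] M (Pi (Univ i) (Var 0))" using typing_sound(1)[OF M] by blast
  with not_sem_typing_Pi_Univ_Var show False by blast
qed

end
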